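(* Let $k$ and $n$ be integers with $n\geqslant 9$ and $n>k \geqslant e \ln n+e$. Then for every $i\in\{1,2,\ldots,n\}$, the number \[ S(n,i,k)=\sum_{\substack{1 \leqslant i_1<i_2<\cdots<i_k \leqslant n,\\ i_j \neq i \text{ for } j=1,2,\ldots,k}} \frac{1}{i_1 i_2 \cdots i_k} \] is not an integer.
   Context: For integers $n,i,k$ with $1\leqslant k<n$ and $1\leqslant i\leqslant n$, $S(n,i,k)$ denotes the $k$-th elementary symmetric function of the $n-1$ numbers $\{1,1/2,\ldots,1/n\}\setminus\{1/i\}$. Here $e$ is Euler's number and $\ln$ the natural logarithm. *)

theory Defs
  imports Complex_Main
begin

definition S :: "nat \<Rightarrow> nat \<Rightarrow> nat \<Rightarrow> real" where
  "S n i k = (\<Sum>A \<in> {A. A \<subseteq> {1..n} - {i} \<and> card A = k}. 1 / (\<Prod>j\<in>A. real j))"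

end

theory Submission
  imports Defs "HOL-Analysis.Harmonic_Numbers"
begin

text \<open>S(n,i,k) is the k-th elementary symmetric function e_k of the weights 1/j, j \<in> T = {1..n} - {i}.
  Every product of k distinct weights occurs k! times in the expansion of (\<Sum>T 1/j)^k, so
  k! e_k \<le> (\<Sum>T 1/j)^k = (H_n - 1/i)^k < (1 + ln n)^k. Since k! \<ge> (k/e)^k and k \<ge> e (1 + ln n),
  this gives 0 < S(n,i,k) < 1.\<close>

definition esym :: "'a set \<Rightarrow> ('a \<Rightarrow> 'b::comm_semiring_1) \<Rightarrow> nat \<Rightarrow> 'b" where
  "esym T w k = (\<Sum>A\<in>{A. A \<subseteq> T \<and> card A = k}. prod w A)"

lemma finite_subsets_card: "finite T \<Longrightarrow> finite {A. A \<subseteq> T \<and> card A = k}"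
  by (rule finite_subset[of _ "Pow T"]) auto

lemma subsets_card_Suc_insert:
  assumes "finite T" "a \<notin> T"
  shows "{A. A \<subseteq> insert a T \<and> card A = Suc m} =
         {A. A \<subseteq> T \<and> card A = Suc m} \<union> insert a ` {A. A \<subseteq> T \<and> card A = m}"
proof (intro equalityI subsetI)
  fix A assume "A \<in> {A. A \<subseteq> insert a T \<and> card A = Suc m}"
  then have A: "A \<subseteq> insert a T" "card A = Suc m" "finite A"
    using assms(1) finite_subset[of A "insert a T"] by auto
  show "A \<in> {A. A \<subseteq> T \<and> card A = Suc m} \<union> insert a ` {A. A \<subseteq> T \<and> card A = m}"
  proof (cases "a \<in> A")
    case True
    then have "A = insert a (A - {a})" "A - {a} \<in> {A. A \<subseteq> T \<and> card A = m}"
      using A by auto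
    then show ?thesis by blast
  qed (use A in auto)
next
  fix A assume "A \<in> {A. A \<subseteq> T \<and> card A = Suc m} \<union> insert a ` {A. A \<subseteq> T \<and> card A = m}"
  then show "A \<in> {A. A \<subseteq> insert a T \<and> card A = Suc m}"
  proof (elim UnE imageE)
    fix B assume B: "A = insert a B" "B \<in> {A. A \<subseteq> T \<and> card A = m}"
    then have "finite B" "a \<notin> B"
      using assms finite_subset[of B T] by auto
    with B show ?thesis by auto
  qed auto
qed

lemma esym_insert_Suc:
  assumes "finite T" "a \<notin> T"
  shows "esym (insert a T) w (Suc m) = esym T w (Suc m) + w a * esym T w m"
proof -
  let ?K = "\<lambda>j. {A. A \<subseteq> T \<and> card A = j}"
  have inj: "inj_on (insert a) (?K m)"
    using assms(2) by (intro inj_onI) (metis Diff_insert_absorb subsetD mem_Collect_eq)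
  have "esym (insert a T) w (Suc m) = esym T w (Suc m) + (\<Sum>A\<in>insert a ` ?K m. prod w A)"
    unfolding esym_def subsets_card_Suc_insert[OF assms]
    using assms by (intro sum.union_disjoint) (auto simp: finite_subsets_card)
  also have "(\<Sum>A\<in>insert a ` ?K m. prod w A) = (\<Sum>A\<in>?K m. prod w (insert a A))"
    by (simp add: sum.reindex[OF inj])
  also have "\<dots> = (\<Sum>A\<in>?K m. w a * prod w A)"
    using assms by (intro sum.cong refl prod.insert) (auto intro: rev_finite_subset)
  also have "\<dots> = w a * esym T w m"
    by (simp add: esym_def sum_distrib_left)
  finally show ?thesis .
qed

lemma esym_0:
  assumes "finite T"
  shows "esym T w 0 = 1"
proof -
  have "A = {}" if "A \<subseteq> T" "card A = 0" for A
    using that assms finite_subset[of A T] by simp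
  then have "{A. A \<subseteq> T \<and> card A = 0} = {{}}"
    by auto
  then show ?thesis by (simp add: esym_def)
qed

lemma esym_empty_Suc: "esym {} w (Suc m) = 0"
  unfolding esym_def by (simp add: Collect_conj_eq)

lemma esym_pos:
  fixes w :: "'a \<Rightarrow> 'b::linordered_semidom"
  assumes "finite T" "\<forall>j\<in>T. 0 < w j" "k \<le> card T"
  shows "0 < esym T w k"
proof -
  obtain A where "A \<subseteq> T" "card A = k"
    using obtain_subset_with_card_n[OF assms(3)] by metis
  then show ?thesis
    unfolding esym_def using assms
    by (intro sum_pos2[of _ A] finite_subsets_card prod_pos prod_nonneg)
       (auto intro: less_imp_le)
qed

lemma two_binomial_terms_le_power_Suc:
  fixes s w :: "'a::linordered_semidom"
  assumes "0 \<le> s" "0 \<le> w"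
  shows "s ^ Suc m + of_nat (Suc m) * w * s ^ m \<le> (s + w) ^ Suc m"
proof (induction m)
  case (Suc m)
  have "(s + w) * (s ^ Suc m + of_nat (Suc m) * w * s ^ m)
      = s ^ Suc (Suc m) + of_nat (Suc (Suc m)) * w * s ^ Suc m + of_nat (Suc m) * w * w * s ^ m"
    by (simp add: algebra_simps)
  then have "s ^ Suc (Suc m) + of_nat (Suc (Suc m)) * w * s ^ Suc m
     \<le> (s + w) * (s ^ Suc m + of_nat (Suc m) * w * s ^ m)"
    using assms by simp
  also have "\<dots> \<le> (s + w) * (s + w) ^ Suc m"
    using Suc assms by (intro mult_left_mono) auto
  finally show ?case by simp
qed simp

lemma fact_mult_esym_le_power_sum:
  fixes w :: "'a \<Rightarrow> 'b::linordered_semidom"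
  assumes "finite T" "\<forall>j\<in>T. 0 \<le> w j"
  shows "fact k * esym T w k \<le> (sum w T) ^ k"
  using assms
proof (induction T arbitrary: k rule: finite_induct)
  case empty
  then show ?case by (cases k) (auto simp: esym_0 esym_empty_Suc)
next
  case (insert a T)
  show ?case
  proof (cases k)
    case (Suc m)
    have w: "0 \<le> w a" "\<forall>j\<in>T. 0 \<le> w j" "0 \<le> sum w T"
      using insert.prems by (auto intro: sum_nonneg)
    have "fact k * esym (insert a T) w k
        = fact (Suc m) * esym T w (Suc m) + of_nat (Suc m) * w a * (fact m * esym T w m)"
      unfolding Suc esym_insert_Suc[OF insert.hyps] by (simp add: algebra_simps)
    also have "\<dots> \<le> sum w T ^ Suc m + of_nat (Suc m) * w a * sum w T ^ m"
      using insert.IH[of "Suc m"] insert.IH[of m] w by (intro add_mono mult_left_mono) auto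
    also have "\<dots> \<le> (sum w T + w a) ^ Suc m"
      using w by (intro two_binomial_terms_le_power_Suc)
    finally show ?thesis
      using Suc insert.hyps by (simp add: add.commute)
  qed (use insert in \<open>simp add: esym_0\<close>)
qed

lemma power_div_fact_le_exp:
  fixes x :: real
  assumes "0 \<le> x"
  shows "x ^ k / fact k \<le> exp x"
proof -
  have "(\<Sum>m\<in>{k}. x ^ m /\<^sub>R fact m) \<le> (\<Sum>m. x ^ m /\<^sub>R fact m)"
    using assms by (intro sum_le_suminf summable_exp_generic) auto
  then show ?thesis
    by (simp add: exp_def divide_inverse mult.commute)
qed

lemma power_div_exp_le_fact: "(real k / exp 1) ^ k \<le> fact k"
proof -
  have "exp (real k) = exp 1 ^ k"
    using exp_of_nat_mult[of k 1] by simp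
  then show ?thesis
    using power_div_fact_le_exp[of "real k" k] by (simp add: power_divide field_simps)
qed

lemma harm_le_one_plus_ln: "n > 0 \<Longrightarrow> harm n \<le> 1 + ln (real n)"
  using euler_mascheroni_sequence_decreasing[of 1 n] by (simp add: harm_def)

lemma S_eq_esym: "S n i k = esym ({1..n} - {i}) (\<lambda>j. 1 / real j) k"
  unfolding S_def esym_def by (simp add: prod_dividef)

lemma S_pos:
  assumes "k < n" "i \<in> {1..n}"
  shows "0 < S n i k"
proof -
  have "k \<le> card ({1..n} - {i})"
    using assms by simp
  then show ?thesis
    unfolding S_eq_esym by (intro esym_pos) auto
qed

lemma fact_mult_S_less_power:
  assumes "i \<in> {1..n}" "0 < k"
  shows "fact k * S n i k < (1 + ln (real n)) ^ k"
proof -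
  have sum_eq: "(\<Sum>j\<in>{1..n} - {i}. 1 / real j) = harm n - 1 / real i"
    using assms(1) by (simp add: sum_diff1 harm_def divide_inverse)
  have "0 < 1 / real i" "1 / real i \<le> 1"
    using assms(1) by auto
  moreover have "1 \<le> (harm n :: real)"
    using harm_mono[of 1 n] assms(1) by (simp add: harm_def)
  moreover have "harm n \<le> 1 + ln (real n)"
    using assms(1) by (intro harm_le_one_plus_ln) simp
  ultimately have "0 \<le> harm n - 1 / real i" "harm n - 1 / real i < 1 + ln (real n)"
    by linarith+
  moreover have "fact k * S n i k \<le> (harm n - 1 / real i) ^ k"
    unfolding S_eq_esym sum_eq[symmetric] by (rule fact_mult_esym_le_power_sum) auto
  ultimately show ?thesis
    using assms(2) power_strict_mono[of "harm n - 1 / real i" "1 + ln (real n)" k] by linarith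
qed

theorem lemma2p3:
  fixes n k i :: nat
  assumes "n \<ge> 9" and "k < n" and "real k \<ge> exp 1 * ln (real n) + exp 1"
    and "i \<in> {1..n}"
  shows "S n i k \<notin> \<int>"
proof -
  have ln_nonneg: "0 \<le> ln (real n)"
    using assms(1) by simp
  have k_bound: "exp 1 * (1 + ln (real n)) \<le> real k"
    using assms(3) by (simp add: algebra_simps)
  moreover have "0 < exp 1 * (1 + ln (real n))"
    using ln_nonneg by simp
  ultimately have "0 < k"
    by simp
  have "fact k * S n i k < (1 + ln (real n)) ^ k"
    using assms(4) \<open>0 < k\<close> by (rule fact_mult_S_less_power)
  also have "\<dots> \<le> (real k / exp 1) ^ k"
    using k_bound ln_nonneg by (intro power_mono) (auto simp: field_simps)
  also have "\<dots> \<le> fact k"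
    by (rule power_div_exp_le_fact)
  finally have "S n i k < 1"
    by simp
  with S_pos[OF assms(2,4)] show ?thesis
    by (auto elim: Ints_cases)
qed

end
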